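(* Let $(\mathfrak g,\mathcal F_\bullet\mathfrak g,R)$ be a filtered Rota–Baxter Lie algebra over a field of characteristic zero. Then, as vector spaces, $\widehat U(\mathfrak g)=\varprojlim U(\mathfrak g)/\mathcal F_nU(\mathfrak g)$ coincides with $\widehat U(\mathfrak g_R)=\varprojlim U(\mathfrak g_R)/\mathcal F_nU(\mathfrak g_R)$.
   Context: Filtered Rota–Baxter Lie algebra: a Lie algebra $\mathfrak g$ with subspaces $\mathfrak g=\mathcal F_1\mathfrak g\supset\mathcal F_2\mathfrak g\supset\cdots$, $[\mathcal F_n\mathfrak g,\mathcal F_m\mathfrak g]\subset\mathcal F_{n+m}\mathfrak g$, and linear $R$ with $[R(x),R(y)]=R([R(x),y]+[x,R(y)]+[x,y])$ and $R(\mathcal F_n\mathfrak g)\subset\mathcal F_n\mathfrak g$. $\mathcal R:U(\mathfrak g)\to U(\mathfrak g)$ is the linear map with $\mathcal R(1)=1$, $\mathcal R(x)=R(x)$, $\mathcal R(xh)=R(x)\mathcal R(h)-\mathcal R([R(x),h])$. $U(\mathfrak g_R)$, the universal enveloping algebra of the descendant Lie algebra $(\mathfrak g,[x,y]_R=[R(x),y]+[x,R(y)]+[x,y])$, is identified with the vector space $U(\mathfrak g)$ equipped with product $a\star b=a_{(1)}\mathcal R(a_{(2)})\,b\,S(\mathcal R(a_{(3)}))$. $\mathcal F_0U(\mathfrak g)=\mathcal F_0U(\mathfrak g_R)=U(\mathfrak g)$; for $n\ge1$, $\mathcal F_nU(\mathfrak g)$ is the span of $x_1\cdots x_k$ and $\mathcal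 F_nU(\mathfrak g_R)$ the span of $x_1\star\cdots\star x_k$, over $k\ge1$, $x_i\in\mathcal F_{n_i}\mathfrak g$, $\sum n_i\ge n$. *)

theory Defs
  imports Main "HOL.Vector_Spaces" "HOL-Library.Poly_Mapping"
begin

definition lie_algebra ::
  "('k::field \<Rightarrow> 'g::ab_group_add \<Rightarrow> 'g) \<Rightarrow> ('g \<Rightarrow> 'g \<Rightarrow> 'g) \<Rightarrow> bool" where
  "lie_algebra scale br \<longleftrightarrow>
     vector_space scale \<and>
     (\<forall>x y z. br (x + y) z = br x z + br y z) \<and>
     (\<forall>x y z. br x (y + z) = br x y + br x z) \<and>
     (\<forall>c x y. br (scale c x) y = scale c (br x y)) \<and>
     (\<forall>c x y. br x (scale c y) = scale c (br x y)) \<and>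
     (\<forall>x. br x x = 0) \<and>
     (\<forall>x y z. br x (br y z) + br y (br z x) + br z (br x y) = 0)"

definition lie_filtration ::
  "('k::field \<Rightarrow> 'g::ab_group_add \<Rightarrow> 'g) \<Rightarrow> ('g \<Rightarrow> 'g \<Rightarrow> 'g) \<Rightarrow> (nat \<Rightarrow> 'g set) \<Rightarrow> bool" where
  "lie_filtration scale br F \<longleftrightarrow>
     F 1 = UNIV \<and>
     (\<forall>n\<ge>1. F (Suc n) \<subseteq> F n) \<and>
     (\<forall>n\<ge>1. module.subspace scale (F n)) \<and>
     (\<forall>n\<ge>1. \<forall>m\<ge>1. \<forall>x\<in>F n. \<forall>y\<in>F m. br x y \<in> F (n + m))"

definition rota_baxter_op ::
  "('k::field \<Rightarrow> 'g::ab_group_add \<Rightarrow> 'g) \<Rightarrow> ('g \<Rightarrow> 'g \<Rightarrow> 'g) \<Rightarrow> ('g \<Rightarrow> 'g) \<Rightarrow> bool" where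
  "rota_baxter_op scale br R \<longleftrightarrow>
     (\<forall>x y. R (x + y) = R x + R y) \<and>
     (\<forall>c x. R (scale c x) = scale c (R x)) \<and>
     (\<forall>x y. br (R x) (R y) = R (br (R x) y + br x (R y) + br x y))"

definition filtered_RB_lie_algebra ::
  "('k::field \<Rightarrow> 'g::ab_group_add \<Rightarrow> 'g) \<Rightarrow> ('g \<Rightarrow> 'g \<Rightarrow> 'g) \<Rightarrow> (nat \<Rightarrow> 'g set)
     \<Rightarrow> ('g \<Rightarrow> 'g) \<Rightarrow> bool" where
  "filtered_RB_lie_algebra scale br F R \<longleftrightarrow>
     lie_algebra scale br \<and> lie_filtration scale br F \<and> rota_baxter_op scale br R \<and>
     (\<forall>n\<ge>1. R ` F n \<subseteq> F n)"

datatype 'a word = Word "'a list"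

instantiation word :: (type) monoid_add
begin
definition zero_word :: "'a word" where "zero_word = Word []"
fun plus_word :: "'a word \<Rightarrow> 'a word \<Rightarrow> 'a word" where
  "plus_word (Word xs) (Word ys) = Word (xs @ ys)"
instance
proof
  fix a b c :: "'a word"
  show "a + b + c = a + (b + c)" by (cases a; cases b; cases c) simp
  show "0 + a = a" by (cases a) (simp add: zero_word_def)
  show "a + 0 = a" by (cases a) (simp add: zero_word_def)
qed
end

text \<open>The free associative unital 'k-algebra on the set 'g: finitely supported
'k-linear combinations of words, multiplication = concatenation convolution.\<close>

type_synonym ('g, 'k) freealg = "'g word \<Rightarrow>\<^sub>0 'k"

definition fconst :: "'k::ring_1 \<Rightarrow> ('g, 'k) freealg" where
  "fconst c = Poly_Mapping.single (Word []) c"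

definition fsmult :: "'k::ring_1 \<Rightarrow> ('g, 'k) freealg \<Rightarrow> ('g, 'k) freealg" where
  "fsmult c p = fconst c * p"

definition fword :: "'g list \<Rightarrow> ('g, 'k::ring_1) freealg" where
  "fword xs = Poly_Mapping.single (Word xs) 1"

definition fgen :: "'g \<Rightarrow> ('g, 'k::ring_1) freealg" where
  "fgen x = fword [x]"

definition kspan :: "('g, 'k::ring_1) freealg set \<Rightarrow> ('g, 'k) freealg set" where
  "kspan S = {(\<Sum>v\<in>A. fsmult (c v) v) | A c. finite A \<and> A \<subseteq> S}"

text \<open>The two-sided ideal I defining U(g) = T(g)/I: generated by the relations
making the generators 'k-linear and imposing xy - yx = [x,y].\<close>

definition U_relations ::
  "('k::field \<Rightarrow> 'g \<Rightarrow> 'g) \<Rightarrow> ('g \<Rightarrow> 'g \<Rightarrow> 'g) \<Rightarrow> ('g::ab_group_add, 'k) freealg set" where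
  "U_relations scale br =
     {fgen (x + y) - fgen x - fgen y | x y. True} \<union>
     {fgen (scale c x) - fsmult c (fgen x) | c x. True} \<union>
     {fgen x * fgen y - fgen y * fgen x - fgen (br x y) | x y. True}"

definition U_ideal ::
  "('k::field \<Rightarrow> 'g \<Rightarrow> 'g) \<Rightarrow> ('g \<Rightarrow> 'g \<Rightarrow> 'g) \<Rightarrow> ('g::ab_group_add, 'k) freealg set" where
  "U_ideal scale br = kspan {fword u * r * fword v | u r v. r \<in> U_relations scale br}"

definition weight_ok :: "(nat \<Rightarrow> 'g set) \<Rightarrow> nat \<Rightarrow> 'g list \<Rightarrow> bool" where
  "weight_ok F n xs \<longleftrightarrow> xs \<noteq> [] \<and>
     (\<exists>ns. length ns = length xs \<and> (\<forall>i<length xs. ns ! i \<ge> 1 \<and> xs ! i \<in> F (ns ! i))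
           \<and> sum_list ns \<ge> n)"

text \<open>Representatives in T(g) of F_n U(g) (for n \<ge> 1: span of products x_1 ... x_k).\<close>

definition FU :: "(nat \<Rightarrow> 'g set) \<Rightarrow> nat \<Rightarrow> ('g, 'k::ring_1) freealg set" where
  "FU F n = (if n = 0 then UNIV else kspan {fword xs | xs. weight_ok F n xs})"

text \<open>The product of U(g_R), transported to U(g): for x \<in> g the formula
 a \<star> b = a_(1) R(a_(2)) b S(R(a_(3))) specialises (using
 \<Delta>^2 x = x\<otimes>1\<otimes>1 + 1\<otimes>x\<otimes>1 + 1\<otimes>1\<otimes>x, R(1)=1, S(1)=1, S(y)=-y) to
 x \<star> b = x b + R(x) b - b R(x).  starprod xs = x_1 \<star> (x_2 \<star> (... \<star> x_k)).\<close>

fun starprod :: "('g \<Rightarrow> 'g) \<Rightarrow> 'g list \<Rightarrow> ('g, 'k::ring_1) freealg" where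
  "starprod R [] = 1"
| "starprod R [x] = fgen x"
| "starprod R (x # xs) =
     (let b = starprod R xs in fgen x * b + fgen (R x) * b - b * fgen (R x))"

definition FUR :: "('g \<Rightarrow> 'g) \<Rightarrow> (nat \<Rightarrow> 'g set) \<Rightarrow> nat \<Rightarrow> ('g, 'k::ring_1) freealg set" where
  "FUR R F n = (if n = 0 then UNIV else kspan {starprod R xs | xs. weight_ok F n xs})"

definition set_plus :: "'a::plus set \<Rightarrow> 'a set \<Rightarrow> 'a set" where
  "set_plus A B = {a + b | a b. a \<in> A \<and> b \<in> B}"

text \<open>Inverse limit of the quotients U/V_n, where V_n are subspaces of U = T/I,
 represented by their preimages W_n = V_n + I in T: an element is a sequence of
 cosets c_n \<in> U/V_n (as subsets of T, cosets of W_n) compatible with the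
 projections U/V_{n+1} \<rightarrow> U/V_n.\<close>

definition inv_limit :: "(nat \<Rightarrow> 'a::ab_group_add set) \<Rightarrow> (nat \<Rightarrow> 'a set) set" where
  "inv_limit W = {c. \<forall>n. (\<exists>a. c n = set_plus {a} (W n)) \<and> c (Suc n) \<subseteq> c n}"

definition completion_U ::
  "('k::field \<Rightarrow> 'g \<Rightarrow> 'g) \<Rightarrow> ('g \<Rightarrow> 'g \<Rightarrow> 'g) \<Rightarrow> (nat \<Rightarrow> 'g set)
     \<Rightarrow> (nat \<Rightarrow> ('g::ab_group_add, 'k) freealg set) set" where
  "completion_U scale br F = inv_limit (\<lambda>n. set_plus (FU F n) (U_ideal scale br))"

definition completion_UR ::
  "('k::field \<Rightarrow> 'g \<Rightarrow> 'g) \<Rightarrow> ('g \<Rightarrow> 'g \<Rightarrow> 'g) \<Rightarrow> (nat \<Rightarrow> 'g set) \<Rightarrow> ('g \<Rightarrow> 'g)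
     \<Rightarrow> (nat \<Rightarrow> ('g::ab_group_add, 'k) freealg set) set" where
  "completion_UR scale br F R = inv_limit (\<lambda>n. set_plus (FUR R F n) (U_ideal scale br))"

end

(*
  Let I be the ideal with U(g) = T(g)/I.  For a generator x the product of U(g_R) is
  x star b = x b + [R x, b], and modulo I the commutator [y, z_1 ... z_k] is the sum over i
  of the words z_1 ... [y, z_i] ... z_k.  Since the bracket and R respect the filtration,
  both x b and [R x, b] raise the filtration degree of b by that of x.  Induction on the
  number of factors therefore puts every star product of weight n into F_n U(g) + I, and
  induction on the length of words gives the converse.  So both filtrations have the same
  preimage in T(g), and the inverse limits are limits of the same quotients.
*)
theory Submission
  imports Defs
begin

lemma (in module_hom) image_span_in_subspace:
  "m2.subspace V \<Longrightarrow> f ` S \<subseteq> V \<Longrightarrow> p \<in> m1.span S \<Longrightarrow> f p \<in> V"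
  by (metis span_image m2.span_minimal image_eqI subsetD)

lemma (in module) set_plus_span_subspace:
  "subspace I \<Longrightarrow> set_plus (span S) I = span (S \<union> I)"
  by (simp add: set_plus_def span_Un span_eq_iff[THEN iffD2])

lemma fconst_central: "p * fconst c = fconst c * (p :: ('g, 'k::comm_ring_1) freealg)"
proof (rule poly_mapping_eqI)
  fix k :: "'g word"
  have delta: "(\<Sum>q. c when q = 0 when k = l + q) = (c when k = l)" for l :: "'g word"
    by (subst when_commute) simp
  show "Poly_Mapping.lookup (p * fconst c) k = Poly_Mapping.lookup (fconst c * p) k"
    unfolding fconst_def zero_word_def[symmetric]
    by (simp add: lookup_mult lookup_single when_mult mult_when delta mult.commute)
qed

lemma fconst_one: "fconst 1 = (1 :: ('g, 'k::ring_1) freealg)"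
  by (simp add: fconst_def zero_word_def[symmetric])

interpretation freealg:
  module "fsmult :: 'k::comm_ring_1 \<Rightarrow> ('g, 'k) freealg \<Rightarrow> ('g, 'k) freealg"
  by unfold_locales
    (simp_all add: fsmult_def fconst_def distrib_left distrib_right single_add mult_single
      mult.assoc[symmetric] fconst_one[unfolded fconst_def])

lemma kspan_eq_span: "kspan S = freealg.span S"
  unfolding kspan_def freealg.span_explicit ..

lemma fsmult_mult: "fsmult c p * q = fsmult c (p * q :: ('g, 'k::comm_ring_1) freealg)"
  by (simp add: fsmult_def mult.assoc)

lemma mult_fsmult: "p * fsmult c q = fsmult c (p * q :: ('g, 'k::comm_ring_1) freealg)"
  by (simp add: fsmult_def mult.assoc[symmetric] fconst_central)

definition commutator :: "'a::ring \<Rightarrow> 'a \<Rightarrow> 'a" where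
  "commutator a b = a * b - b * a"

lemma module_hom_mult_left:
  "module_hom fsmult fsmult (\<lambda>p. a * p :: ('g, 'k::comm_ring_1) freealg)"
  by (simp add: module_hom_iff freealg.module_axioms mult_fsmult distrib_left)

lemma module_hom_commutator:
  "module_hom fsmult fsmult (commutator (a :: ('g, 'k::comm_ring_1) freealg))"
  by (simp add: module_hom_iff freealg.module_axioms commutator_def mult_fsmult fsmult_mult
      algebra_simps)

lemma fword_Nil: "fword [] = (1 :: ('g, 'k::ring_1) freealg)"
  by (simp add: fword_def zero_word_def[symmetric])

lemma fword_append: "fword (xs @ ys) = (fword xs * fword ys :: ('g, 'k::ring_1) freealg)"
  by (simp add: fword_def mult_single)

lemma fword_Cons: "fword (x # xs) = (fgen x * fword xs :: ('g, 'k::ring_1) freealg)"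
  using fword_append[of "[x]" xs] by (simp add: fgen_def)

lemma U_ideal_eq_span:
  "U_ideal scale br = freealg.span {fword u * r * fword v | u r v. r \<in> U_relations scale br}"
  by (simp add: U_ideal_def kspan_eq_span)

lemma subspace_U_ideal: "freealg.subspace (U_ideal scale br)"
  by (simp add: U_ideal_eq_span)

lemma U_ideal_sandwich:
  assumes "i \<in> U_ideal scale br"
  shows "fword u * i * fword v \<in> U_ideal scale br"
proof -
  have hom: "module_hom fsmult fsmult (\<lambda>p. fword u * p * fword v)"
    by (simp add: module_hom_iff freealg.module_axioms mult_fsmult fsmult_mult algebra_simps)
  have gen: "fword u * (fword u' * r * fword v') * fword v \<in> U_ideal scale br"
    if "r \<in> U_relations scale br" for u' r v'
  proof -
    have "fword u * (fword u' * r * fword v') * fword v = fword (u @ u') * r * fword (v' @ v)"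
      by (simp add: fword_append mult.assoc)
    then show ?thesis
      using that unfolding U_ideal_eq_span by (blast intro: freealg.span_base)
  qed
  show ?thesis
  proof (rule module_hom.image_span_in_subspace[OF hom subspace_U_ideal])
    show "i \<in> freealg.span {fword u * r * fword v | u r v. r \<in> U_relations scale br}"
      using assms unfolding U_ideal_eq_span .
  qed (use gen in blast)
qed

lemma U_relations_subset_U_ideal: "U_relations scale br \<subseteq> U_ideal scale br"
proof
  fix r assume "r \<in> U_relations scale br"
  then have "fword [] * r * fword [] \<in> U_ideal scale br"
    unfolding U_ideal_eq_span by (blast intro: freealg.span_base)
  then show "r \<in> U_ideal scale br" by (simp add: fword_Nil)
qed

lemma fgen_mult_U_ideal: "i \<in> U_ideal scale br \<Longrightarrow> fgen x * i \<in> U_ideal scale br"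
  using U_ideal_sandwich[of i scale br "[x]" "[]"] by (simp add: fword_Nil fgen_def)

lemma U_ideal_mult_fgen: "i \<in> U_ideal scale br \<Longrightarrow> i * fgen x \<in> U_ideal scale br"
  using U_ideal_sandwich[of i scale br "[]" "[x]"] by (simp add: fword_Nil fgen_def)

lemma commutator_U_ideal:
  "i \<in> U_ideal scale br \<Longrightarrow> commutator (fgen y) i \<in> U_ideal scale br"
  unfolding commutator_def
  by (intro freealg.subspace_diff[OF subspace_U_ideal] fgen_mult_U_ideal U_ideal_mult_fgen)

lemma commutator_fword:
  "commutator (fgen y) (fword zs :: ('g, 'k::ring_1) freealg) =
     (\<Sum>i<length zs.
        fword (take i zs) * commutator (fgen y) (fgen (zs ! i)) * fword (drop (Suc i) zs))"
proof -
  define P where "P i = fword (take i zs) * fgen y * (fword (drop i zs) :: ('g, 'k) freealg)" for i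
  have "fword (take i zs) * commutator (fgen y) (fgen (zs ! i)) * fword (drop (Suc i) zs)
      = P i - P (Suc i)" if "i < length zs" for i
    using that unfolding P_def commutator_def
    by (simp add: take_Suc_conv_app_nth Cons_nth_drop_Suc[symmetric] fword_append fword_Cons
        fword_Nil algebra_simps)
  then have "(\<Sum>i<length zs.
        fword (take i zs) * commutator (fgen y) (fgen (zs ! i)) * fword (drop (Suc i) zs))
      = (\<Sum>i<length zs. P i - P (Suc i))"
    by (intro sum.cong) auto
  also have "\<dots> = P 0 - P (length zs)"
    by (rule sum_lessThan_telescope')
  also have "\<dots> = commutator (fgen y) (fword zs)"
    by (simp add: P_def commutator_def fword_Nil)
  finally show ?thesis ..
qed

lemma commutator_fword_mod_U_ideal:
  fixes zs :: "'g::ab_group_add list" and scale :: "'k::field \<Rightarrow> 'g \<Rightarrow> 'g"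
  shows "commutator (fgen y) (fword zs) \<in>
     freealg.span ({fword (zs[i := br y (zs ! i)]) | i. i < length zs} \<union> U_ideal scale br)"
  (is "_ \<in> ?V")
proof -
  have "fword (take i zs) * commutator (fgen y) (fgen (zs ! i)) * fword (drop (Suc i) zs) \<in> ?V"
    if i: "i < length zs" for i
  proof -
    let ?r = "commutator (fgen y) (fgen (zs ! i)) - fgen (br y (zs ! i))"
    have "?r \<in> U_ideal scale br"
      using U_relations_subset_U_ideal unfolding U_relations_def commutator_def by blast
    then have "fword (take i zs) * ?r * fword (drop (Suc i) zs) \<in> ?V"
      by (blast intro: freealg.span_base U_ideal_sandwich)
    moreover have "fword (zs[i := br y (zs ! i)]) \<in> ?V"
      using i by (blast intro: freealg.span_base)
    ultimately have "fword (take i zs) * ?r * fword (drop (Suc i) zs) + fword (zs[i := br y (zs ! i)])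
        \<in> ?V"
      by (rule freealg.span_add)
    also have "fword (take i zs) * ?r * fword (drop (Suc i) zs) + fword (zs[i := br y (zs ! i)])
        = fword (take i zs) * commutator (fgen y) (fgen (zs ! i)) * fword (drop (Suc i) zs)"
      using i by (simp add: upd_conv_take_nth_drop fword_append fword_Cons algebra_simps)
    finally show ?thesis .
  qed
  then show ?thesis
    unfolding commutator_fword by (intro freealg.span_sum) simp
qed

lemma weight_ok_iff:
  "weight_ok F n xs \<longleftrightarrow>
     xs \<noteq> [] \<and> (\<exists>ns. list_all2 (\<lambda>x m. 1 \<le> m \<and> x \<in> F m) xs ns \<and> n \<le> sum_list ns)"
  unfolding weight_ok_def list_all2_conv_all_nth by (auto simp: eq_commute[of "length xs"])

lemma weight_ok_mono: "weight_ok F n xs \<Longrightarrow> k \<le> n \<Longrightarrow> weight_ok F k xs"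
  unfolding weight_ok_iff by (meson order_trans)

lemma weight_ok_Cons:
  "1 \<le> m \<Longrightarrow> x \<in> F m \<Longrightarrow> weight_ok F k ys \<Longrightarrow> weight_ok F (m + k) (x # ys)"
  unfolding weight_ok_iff by (fastforce simp: list_all2_Cons1)

lemma weight_ok_ConsE:
  assumes "weight_ok F n (x # ys)" and "ys \<noteq> []"
  obtains m k where "1 \<le> m" "x \<in> F m" "weight_ok F k ys" "n \<le> m + k"
  using assms unfolding weight_ok_iff list_all2_Cons1 by force

text \<open>The preimage of \<open>F\<^sub>n U(\<FRAK>g)\<close> in the free algebra, and likewise for \<open>U(\<FRAK>g\<^sub>R)\<close>
  below, but only for \<open>n \<ge> 1\<close>: \<^const>\<open>weight_ok\<close> excludes the empty word, so for \<open>n = 0\<close>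
  this is not the whole algebra.\<close>
definition FU_plus_I ::
  "('k::field \<Rightarrow> 'g \<Rightarrow> 'g) \<Rightarrow> ('g \<Rightarrow> 'g \<Rightarrow> 'g) \<Rightarrow> (nat \<Rightarrow> 'g set) \<Rightarrow> nat
     \<Rightarrow> ('g::ab_group_add, 'k) freealg set" where
  "FU_plus_I scale br F n = freealg.span ({fword xs | xs. weight_ok F n xs} \<union> U_ideal scale br)"

definition FUR_plus_I ::
  "('k::field \<Rightarrow> 'g \<Rightarrow> 'g) \<Rightarrow> ('g \<Rightarrow> 'g \<Rightarrow> 'g) \<Rightarrow> ('g \<Rightarrow> 'g) \<Rightarrow> (nat \<Rightarrow> 'g set) \<Rightarrow> nat
     \<Rightarrow> ('g::ab_group_add, 'k) freealg set" where
  "FUR_plus_I scale br R F n =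
     freealg.span ({starprod R xs | xs. weight_ok F n xs} \<union> U_ideal scale br)"

lemma set_plus_FU_U_ideal:
  "1 \<le> n \<Longrightarrow> set_plus (FU F n) (U_ideal scale br) = FU_plus_I scale br F n"
  by (simp add: FU_def FU_plus_I_def kspan_eq_span freealg.set_plus_span_subspace subspace_U_ideal)

lemma set_plus_FUR_U_ideal:
  "1 \<le> n \<Longrightarrow> set_plus (FUR R F n) (U_ideal scale br) = FUR_plus_I scale br R F n"
  by (simp add: FUR_def FUR_plus_I_def kspan_eq_span freealg.set_plus_span_subspace subspace_U_ideal)

lemma subspace_FU_plus_I: "freealg.subspace (FU_plus_I scale br F n)"
  by (simp add: FU_plus_I_def)

lemma subspace_FUR_plus_I: "freealg.subspace (FUR_plus_I scale br R F n)"
  by (simp add: FUR_plus_I_def)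

lemma FU_plus_I_antimono: "k \<le> n \<Longrightarrow> FU_plus_I scale br F n \<subseteq> FU_plus_I scale br F k"
  unfolding FU_plus_I_def by (intro freealg.span_mono) (auto intro: weight_ok_mono)

lemma FUR_plus_I_antimono: "k \<le> n \<Longrightarrow> FUR_plus_I scale br R F n \<subseteq> FUR_plus_I scale br R F k"
  unfolding FUR_plus_I_def by (intro freealg.span_mono) (auto intro: weight_ok_mono)

lemma fgen_mult_FU_plus_I:
  assumes "1 \<le> m" "x \<in> F m" "p \<in> FU_plus_I scale br F k"
  shows "fgen x * p \<in> FU_plus_I scale br F (m + k)"
proof -
  have "fgen x * fword ws \<in> FU_plus_I scale br F (m + k)" if "weight_ok F k ws" for ws
    using weight_ok_Cons[OF assms(1,2) that] unfolding FU_plus_I_def fword_Cons[symmetric]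
    by (blast intro: freealg.span_base)
  moreover have "fgen x * i \<in> FU_plus_I scale br F (m + k)" if "i \<in> U_ideal scale br" for i
    using fgen_mult_U_ideal[OF that] unfolding FU_plus_I_def by (simp add: freealg.span_base)
  ultimately show ?thesis
    using assms(3) unfolding FU_plus_I_def[of _ _ _ k]
    by (intro module_hom.image_span_in_subspace[OF module_hom_mult_left subspace_FU_plus_I]) auto
qed

definition gen_star :: "('g \<Rightarrow> 'g) \<Rightarrow> 'g \<Rightarrow> ('g, 'k::ring_1) freealg \<Rightarrow> ('g, 'k) freealg" where
  "gen_star R x p = fgen x * p + commutator (fgen (R x)) p"

lemma starprod_Cons: "ys \<noteq> [] \<Longrightarrow> starprod R (x # ys) = gen_star R x (starprod R ys)"
  by (cases ys) (simp_all add: gen_star_def commutator_def Let_def algebra_simps)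

lemma module_hom_gen_star:
  "module_hom fsmult fsmult (gen_star R x :: ('g, 'k::comm_ring_1) freealg \<Rightarrow> _)"
  by (simp add: module_hom_iff freealg.module_axioms gen_star_def commutator_def mult_fsmult
      fsmult_mult algebra_simps)

lemma gen_star_FUR_plus_I:
  assumes "1 \<le> m" "x \<in> F m" "p \<in> FUR_plus_I scale br R F k"
  shows "gen_star R x p \<in> FUR_plus_I scale br R F (m + k)"
proof -
  have "gen_star R x (starprod R ws) \<in> FUR_plus_I scale br R F (m + k)"
    if ws: "weight_ok F k ws" for ws
  proof -
    have "gen_star R x (starprod R ws) = starprod R (x # ws)"
      using ws by (simp add: weight_ok_def starprod_Cons)
    then show ?thesis
      using weight_ok_Cons[OF assms(1,2) ws] unfolding FUR_plus_I_def
      by (auto intro: freealg.span_base)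
  qed
  moreover have "gen_star R x i \<in> FUR_plus_I scale br R F (m + k)"
    if i: "i \<in> U_ideal scale br" for i
  proof -
    have "gen_star R x i \<in> U_ideal scale br"
      unfolding gen_star_def
      by (intro freealg.subspace_add[OF subspace_U_ideal] fgen_mult_U_ideal commutator_U_ideal i)
    then show ?thesis
      unfolding FUR_plus_I_def by (simp add: freealg.span_base)
  qed
  ultimately show ?thesis
    using assms(3) unfolding FUR_plus_I_def[of _ _ _ _ k]
    by (intro module_hom.image_span_in_subspace[OF module_hom_gen_star subspace_FUR_plus_I]) auto
qed

context
  fixes F :: "nat \<Rightarrow> 'g::ab_group_add set" and br :: "'g \<Rightarrow> 'g \<Rightarrow> 'g"
  assumes bracket_filtered:
    "\<And>n m x y. 1 \<le> n \<Longrightarrow> 1 \<le> m \<Longrightarrow> x \<in> F n \<Longrightarrow> y \<in> F m \<Longrightarrow> br x y \<in> F (n + m)"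
begin

lemma weight_ok_update_bracket:
  assumes "1 \<le> m" "y \<in> F m" "weight_ok F k zs" "i < length zs"
  shows "weight_ok F (m + k) (zs[i := br y (zs ! i)])"
proof -
  obtain ns where ns: "list_all2 (\<lambda>x m. 1 \<le> m \<and> x \<in> F m) zs ns" "k \<le> sum_list ns"
    and "zs \<noteq> []"
    using assms(3) unfolding weight_ok_iff by blast
  have i: "i < length ns" "1 \<le> ns ! i" "zs ! i \<in> F (ns ! i)"
    using ns(1) assms(4) by (auto simp: list_all2_conv_all_nth)
  have "list_all2 (\<lambda>x m. 1 \<le> m \<and> x \<in> F m) (zs[i := br y (zs ! i)]) (ns[i := m + ns ! i])"
    using ns(1) i assms(1,2) by (intro list_all2_update_cong) (auto intro: bracket_filtered)
  moreover have "m + k \<le> sum_list (ns[i := m + ns ! i])"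
    using ns(2) i(1) by (simp add: sum_list_update)
  ultimately show ?thesis
    using \<open>zs \<noteq> []\<close> unfolding weight_ok_iff by auto
qed

lemma commutator_FU_plus_I:
  assumes "1 \<le> m" "y \<in> F m" "p \<in> FU_plus_I scale br F k"
  shows "commutator (fgen y) p \<in> FU_plus_I scale br F (m + k)"
proof -
  have "commutator (fgen y) (fword ws) \<in> FU_plus_I scale br F (m + k)"
    if ws: "weight_ok F k ws" for ws
  proof -
    have "{fword (ws[i := br y (ws ! i)]) | i. i < length ws} \<union> U_ideal scale br
        \<subseteq> {fword xs | xs. weight_ok F (m + k) xs} \<union> U_ideal scale br"
      using weight_ok_update_bracket[OF assms(1,2) ws] by blast
    then show ?thesis
      using commutator_fword_mod_U_ideal[of y ws br scale] unfolding FU_plus_I_def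
      by (meson freealg.span_mono subsetD)
  qed
  moreover have "commutator (fgen y) i \<in> FU_plus_I scale br F (m + k)"
    if "i \<in> U_ideal scale br" for i
    using commutator_U_ideal[OF that] unfolding FU_plus_I_def by (simp add: freealg.span_base)
  ultimately show ?thesis
    using assms(3) unfolding FU_plus_I_def[of _ _ _ k]
    by (intro module_hom.image_span_in_subspace[OF module_hom_commutator subspace_FU_plus_I]) auto
qed

context
  fixes R :: "'g \<Rightarrow> 'g"
  assumes R_filtered: "\<And>n x. 1 \<le> n \<Longrightarrow> x \<in> F n \<Longrightarrow> R x \<in> F n"
begin

lemma gen_star_FU_plus_I:
  assumes "1 \<le> m" "x \<in> F m" "p \<in> FU_plus_I scale br F k"
  shows "gen_star R x p \<in> FU_plus_I scale br F (m + k)"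
  using fgen_mult_FU_plus_I[OF assms] commutator_FU_plus_I[OF assms(1) R_filtered[OF assms(1,2)] assms(3)]
  unfolding gen_star_def by (rule freealg.subspace_add[OF subspace_FU_plus_I])

lemma starprod_in_FU_plus_I: "weight_ok F n xs \<Longrightarrow> starprod R xs \<in> FU_plus_I scale br F n"
proof (induction xs arbitrary: n)
  case Nil
  then show ?case by (simp add: weight_ok_def)
next
  case (Cons x ys)
  show ?case
  proof (cases "ys = []")
    case True
    then show ?thesis
      using Cons.prems unfolding FU_plus_I_def by (auto simp: fgen_def intro: freealg.span_base)
  next
    case False
    obtain m k where m: "1 \<le> m" "x \<in> F m" and ys: "weight_ok F k ys" and n: "n \<le> m + k"
      using Cons.prems False by (rule weight_ok_ConsE)
    have "gen_star R x (starprod R ys) \<in> FU_plus_I scale br F (m + k)"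
      using gen_star_FU_plus_I[OF m Cons.IH[OF ys]] .
    then show ?thesis
      using FU_plus_I_antimono[OF n] False by (auto simp: starprod_Cons)
  qed
qed

text \<open>Here the induction is on the length: the commutator \<open>[R x, w]\<close> is, modulo the ideal,
  a sum of words of the same length as \<open>w\<close>, one letter shorter than \<open>x w\<close>.\<close>
lemma fword_in_FUR_plus_I: "weight_ok F n xs \<Longrightarrow> fword xs \<in> FUR_plus_I scale br R F n"
proof (induction "length xs" arbitrary: xs n rule: less_induct)
  case less
  obtain x ys where xs: "xs = x # ys"
    using less.prems by (cases xs) (auto simp: weight_ok_def)
  show ?case
  proof (cases "ys = []")
    case True
    then have "fword xs = starprod R xs"
      by (simp add: xs fgen_def)
    then show ?thesis
      using less.prems unfolding FUR_plus_I_def by (auto intro: freealg.span_base)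
  next
    case False
    obtain m k where m: "1 \<le> m" "x \<in> F m" and ys: "weight_ok F k ys" and n: "n \<le> m + k"
      using less.prems False unfolding xs by (rule weight_ok_ConsE)
    have "gen_star R x (fword ys) \<in> FUR_plus_I scale br R F (m + k)"
      using gen_star_FUR_plus_I[OF m less.hyps[OF _ ys]] xs by simp
    moreover have "commutator (fgen (R x)) (fword ys) \<in> FUR_plus_I scale br R F (m + k)"
    proof -
      have "{fword (ys[i := br (R x) (ys ! i)]) | i. i < length ys} \<union> U_ideal scale br
          \<subseteq> FUR_plus_I scale br R F (m + k)"
        using less.hyps[of "ys[_ := _]"] weight_ok_update_bracket[OF m(1) R_filtered[OF m] ys] xs
        unfolding FUR_plus_I_def by (auto intro: freealg.span_base)
      then have "freealg.span ({fword (ys[i := br (R x) (ys ! i)]) | i. i < length ys}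
          \<union> U_ideal scale br) \<subseteq> FUR_plus_I scale br R F (m + k)"
        by (rule freealg.span_minimal[OF _ subspace_FUR_plus_I])
      then show ?thesis
        using commutator_fword_mod_U_ideal[of "R x" ys br scale] by blast
    qed
    moreover have "fword xs = gen_star R x (fword ys) - commutator (fgen (R x)) (fword ys)"
      by (simp add: xs gen_star_def fword_Cons)
    ultimately have "fword xs \<in> FUR_plus_I scale br R F (m + k)"
      using freealg.subspace_diff[OF subspace_FUR_plus_I] by metis
    then show ?thesis
      using FUR_plus_I_antimono[OF n] by blast
  qed
qed

lemma FU_plus_I_eq_FUR_plus_I: "FU_plus_I scale br F n = FUR_plus_I scale br R F n"
proof -
  have "{fword xs | xs. weight_ok F n xs} \<union> U_ideal scale br \<subseteq> FUR_plus_I scale br R F n"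
    using fword_in_FUR_plus_I unfolding FUR_plus_I_def by (blast intro: freealg.span_base)
  moreover have "{starprod R xs | xs. weight_ok F n xs} \<union> U_ideal scale br \<subseteq> FU_plus_I scale br F n"
    using starprod_in_FU_plus_I unfolding FU_plus_I_def by (blast intro: freealg.span_base)
  ultimately show ?thesis
    unfolding FU_plus_I_def FUR_plus_I_def freealg.span_eq by blast
qed

end

end

theorem corollary4p11:
  fixes scale :: "'k::field_char_0 \<Rightarrow> 'g::ab_group_add \<Rightarrow> 'g"
    and br :: "'g \<Rightarrow> 'g \<Rightarrow> 'g"
    and F :: "nat \<Rightarrow> 'g set"
    and R :: "'g \<Rightarrow> 'g"
  assumes "filtered_RB_lie_algebra scale br F R"
  shows "completion_U scale br F = completion_UR scale br F R"
proof -
  from assms have bracket: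
      "\<And>n m x y. 1 \<le> n \<Longrightarrow> 1 \<le> m \<Longrightarrow> x \<in> F n \<Longrightarrow> y \<in> F m \<Longrightarrow> br x y \<in> F (n + m)"
    and R: "\<And>n x. 1 \<le> n \<Longrightarrow> x \<in> F n \<Longrightarrow> R x \<in> F n"
    unfolding filtered_RB_lie_algebra_def lie_filtration_def by blast+
  have filtrations_eq: "FU_plus_I scale br F n = FUR_plus_I scale br R F n" for n
    using FU_plus_I_eq_FUR_plus_I[where F = F and br = br and R = R, OF bracket R] .
  have "set_plus (FU F n) (U_ideal scale br) = set_plus (FUR R F n) (U_ideal scale br)" for n
  proof (cases "n = 0")
    case True
    then show ?thesis by (simp add: FU_def FUR_def)
  next
    case False
    then show ?thesis
      by (simp add: set_plus_FU_U_ideal set_plus_FUR_U_ideal filtrations_eq)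
  qed
  then show ?thesis
    unfolding completion_U_def completion_UR_def by simp
qed

end
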